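(* Let $G\subset GL(V)$ be a reflection group. The following are equivalent: (1) $\ell(g)=\operatorname{codim}(g)$ for every $g\in G$; (2) $\ell(g)=\operatorname{codim}(g)$ for every codimension atom $g\in G$; (3) every codimension atom of $G$ is a reflection; (4) for every $g\neq 1$ in $G$ there exists a reflection $s\in G$ such that $\operatorname{codim}(gs)<\operatorname{codim}(g)$.
   Context: $V$ is a finite-dimensional vector space of dimension $n$ over $\mathbb{R}$ or $\mathbb{C}$. A reflection is an element of $GL(V)$ of finite order fixing a hyperplane pointwise; a reflection group is a finite subgroup of $GL(V)$ generated by reflections. $\ell(g)$ is the minimal number of reflections of $G$ whose product is $g$ ($\ell(1)=0$). $\operatorname{codim}(g)=n-\dim\{v\in V:gv=v\}$. The codimension order is the partial order on $G$ given by $a\le_\perp c$ iff $\operatorname{codim}(a)+\operatorname{codim}(a^{-1}c)=\operatorname{codim}(c)$; a codimension atom is an element covering the identity $1$ (the minimum) in this poset. *)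

theory Defs
  imports "HOL-Analysis.Analysis"
begin

text \<open>V = 'k^'n with 'k a real normed field (i.e. R or C up to isomorphism),
  n = CARD('n). Elements of GL(V) are invertible n x n matrices acting by *v.\<close>

definition fixspace :: "'k::field^'n^'n \<Rightarrow> ('k^'n) set" where
  "fixspace g = {v. g *v v = v}"

definition codim :: "'k::field^'n^'n \<Rightarrow> nat" where
  "codim g = CARD('n) - vec.dim (fixspace g)"

definition mpow :: "'k::field^'n^'n \<Rightarrow> nat \<Rightarrow> 'k^'n^'n" where
  "mpow g k = (((**) g) ^^ k) (mat 1)"

definition has_finite_order :: "'k::field^'n^'n \<Rightarrow> bool" where
  "has_finite_order g \<longleftrightarrow> (\<exists>k>0. mpow g k = mat 1)"

definition is_reflection :: "'k::field^'n^'n \<Rightarrow> bool" where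
  "is_reflection g \<longleftrightarrow> invertible g \<and> g \<noteq> mat 1 \<and> has_finite_order g \<and>
     (\<exists>H. vec.subspace H \<and> vec.dim H = CARD('n) - 1 \<and> (\<forall>v\<in>H. g *v v = v))"

inductive_set gen_group :: "('k::field^'n^'n) set \<Rightarrow> ('k^'n^'n) set" for R where
  gen_one: "mat 1 \<in> gen_group R"
| gen_base: "r \<in> R \<Longrightarrow> r \<in> gen_group R"
| gen_mult: "a \<in> gen_group R \<Longrightarrow> b \<in> gen_group R \<Longrightarrow> a ** b \<in> gen_group R"
| gen_inv: "a \<in> gen_group R \<Longrightarrow> matrix_inv a \<in> gen_group R"

definition reflections :: "('k::field^'n^'n) set \<Rightarrow> ('k^'n^'n) set" where
  "reflections G = {s\<in>G. is_reflection s}"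

definition is_matrix_group :: "('k::field^'n^'n) set \<Rightarrow> bool" where
  "is_matrix_group G \<longleftrightarrow> (\<forall>g\<in>G. invertible g) \<and> mat 1 \<in> G \<and>
     (\<forall>a\<in>G. \<forall>b\<in>G. a ** b \<in> G) \<and> (\<forall>a\<in>G. matrix_inv a \<in> G)"

definition reflection_group :: "('k::field^'n^'n) set \<Rightarrow> bool" where
  "reflection_group G \<longleftrightarrow> finite G \<and> is_matrix_group G \<and>
     G = gen_group {s\<in>G. is_reflection s}"

definition refl_length :: "('k::field^'n^'n) set \<Rightarrow> 'k^'n^'n \<Rightarrow> nat" where
  "refl_length G g = (LEAST k. \<exists>l. length l = k \<and> set l \<subseteq> reflections G \<and> foldr (**) l (mat 1) = g)"

definition codim_le :: "'k::field^'n^'n \<Rightarrow> 'k^'n^'n \<Rightarrow> bool" where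
  "codim_le a c \<longleftrightarrow> codim a + codim (matrix_inv a ** c) = codim c"

definition codim_atom :: "('k::field^'n^'n) set \<Rightarrow> 'k^'n^'n \<Rightarrow> bool" where
  "codim_atom G g \<longleftrightarrow> g \<in> G \<and> g \<noteq> mat 1 \<and> codim_le (mat 1) g \<and>
     \<not> (\<exists>h\<in>G. h \<noteq> mat 1 \<and> h \<noteq> g \<and> codim_le (mat 1) h \<and> codim_le h g)"

end

theory Submission imports Defs begin

text \<open>The reflection length always dominates the codimension, because codimension is subadditive
  and a reflection has codimension 1.  If codimension atoms are reflections, then below
  \<open>g\<^sup>-\<^sup>1 \<noteq> 1\<close> in the codimension order there is an atom, i.e.\ a reflection \<open>s\<close> with
  \<open>codim (g s) = codim g - 1\<close>; iterating this factors \<open>g\<close> into \<open>codim g\<close> reflections.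
  Conversely, a codimension atom of reflection length \<open>codim g\<close> lies above the first
  reflection of a minimal factorisation, so it must be that reflection.\<close>

lemma matrix_inv_inverse:
  fixes A :: "'k::field^'n^'n"
  assumes "invertible A"
  shows matrix_mul_matrix_inv: "A ** matrix_inv A = mat 1"
    and matrix_inv_mul: "matrix_inv A ** A = mat 1"
proof -
  have "\<exists>A'. A ** A' = mat 1 \<and> A' ** A = mat 1" using assms unfolding invertible_def by blast
  hence "A ** matrix_inv A = mat 1 \<and> matrix_inv A ** A = mat 1"
    unfolding matrix_inv_def by (rule someI_ex)
  thus "A ** matrix_inv A = mat 1" "matrix_inv A ** A = mat 1" by auto
qed

lemma matrix_inv_unique:
  fixes A B :: "'k::field^'n^'n"
  assumes "invertible A" "B ** A = mat 1"
  shows "matrix_inv A = B"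
proof -
  have "B = B ** (A ** matrix_inv A)" by (simp add: matrix_mul_matrix_inv[OF assms(1)])
  also have "\<dots> = matrix_inv A" by (simp add: matrix_mul_assoc assms(2))
  finally show ?thesis by simp
qed

lemma invertible_matrix_inv:
  fixes A :: "'k::field^'n^'n"
  assumes "invertible A" shows "invertible (matrix_inv A)"
  using matrix_inv_inverse[OF assms] unfolding invertible_def by blast

lemma invertible_mat1: "invertible (mat 1 :: 'k::field^'n^'n)"
  by (auto simp: invertible_def)

lemma matrix_inv_mat1: "matrix_inv (mat 1 :: 'k::field^'n^'n) = mat 1"
  by (rule matrix_inv_unique) (simp_all add: invertible_mat1)

lemma matrix_inv_mult:
  fixes A B :: "'k::field^'n^'n"
  assumes "invertible A" "invertible B"
  shows "matrix_inv (A ** B) = matrix_inv B ** matrix_inv A"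
proof (rule matrix_inv_unique)
  show "invertible (A ** B)" using assms by (rule invertible_mult)
  have "matrix_inv B ** matrix_inv A ** (A ** B) = matrix_inv B ** (matrix_inv A ** A) ** B"
    by (simp add: matrix_mul_assoc)
  also have "\<dots> = mat 1"
    by (simp add: matrix_inv_mul[OF assms(1)] matrix_inv_mul[OF assms(2)])
  finally show "matrix_inv B ** matrix_inv A ** (A ** B) = mat 1" .
qed

lemma matrix_inv_matrix_inv:
  fixes A :: "'k::field^'n^'n"
  assumes "invertible A" shows "matrix_inv (matrix_inv A) = A"
  by (rule matrix_inv_unique[OF invertible_matrix_inv[OF assms] matrix_mul_matrix_inv[OF assms]])

lemma matrix_inv_eq_mat1_iff:
  fixes A :: "'k::field^'n^'n"
  assumes "invertible A" shows "matrix_inv A = mat 1 \<longleftrightarrow> A = mat 1"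
  using matrix_inv_matrix_inv[OF assms] matrix_inv_mat1 by auto

lemma matrix_mul_cancel_left:
  fixes A B :: "'k::field^'n^'n"
  assumes "invertible A" shows "A ** (matrix_inv A ** B) = B"
  by (simp add: matrix_mul_assoc matrix_mul_matrix_inv[OF assms])

lemma fixspace_subspace: "vec.subspace (fixspace (g::'k::field^'n^'n))"
  unfolding vec.subspace_def fixspace_def
  by (auto simp: matrix_vector_right_distrib vector_scalar_commute)

lemma dim_fixspace_le: "vec.dim (fixspace (g::'k::field^'n^'n)) \<le> CARD('n)"
  by (rule dim_subset_UNIV_cart_gen)

lemma codim_mat1: "codim (mat 1 :: 'k::field^'n^'n) = 0"
proof -
  have "fixspace (mat 1 :: 'k::field^'n^'n) = UNIV" by (auto simp: fixspace_def)
  thus ?thesis unfolding codim_def by (simp only: vec_dim_card)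
qed

lemma codim_eq_0_iff: "codim (g::'k::field^'n^'n) = 0 \<longleftrightarrow> g = mat 1"
proof
  assume "codim g = 0"
  hence "vec.dim (fixspace g) = CARD('n)" using dim_fixspace_le[of g] by (simp add: codim_def)
  hence "vec.span (fixspace g) = UNIV"
    by (metis vec.dim_eq_full vec.dimension_def vec_dim_card vec.dim_UNIV)
  hence "fixspace g = UNIV" using fixspace_subspace[of g] by (metis vec.span_eq_iff)
  thus "g = mat 1" by (auto simp: fixspace_def matrix_eq)
qed (simp add: codim_mat1)

text \<open>Fixed spaces intersect in a subspace fixed by the product, and Grassmann's formula
  bounds the dimension of that intersection from below.\<close>
lemma codim_mult_le:
  fixes a b :: "'k::field^'n^'n"
  shows "codim (a ** b) \<le> codim a + codim b"
proof -
  let ?S = "{x + y |x y. x \<in> fixspace a \<and> y \<in> fixspace b}"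
  have grassmann: "vec.dim ?S + vec.dim (fixspace a \<inter> fixspace b)
      = vec.dim (fixspace a) + vec.dim (fixspace b)"
    by (rule vec.dim_sums_Int[OF fixspace_subspace fixspace_subspace])
  have "fixspace a \<inter> fixspace b \<subseteq> fixspace (a ** b)"
    by (auto simp: fixspace_def matrix_vector_mul_assoc[symmetric])
  hence "vec.dim (fixspace a \<inter> fixspace b) \<le> vec.dim (fixspace (a ** b))" by (rule vec.dim_subset)
  moreover have "vec.dim ?S \<le> CARD('n)" by (rule dim_subset_UNIV_cart_gen)
  ultimately show ?thesis
    using grassmann dim_fixspace_le[of a] dim_fixspace_le[of b] dim_fixspace_le[of "a ** b"]
    unfolding codim_def by linarith
qed

lemma fixspace_matrix_inv:
  fixes g :: "'k::field^'n^'n"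
  assumes "invertible g" shows "fixspace (matrix_inv g) = fixspace g"
proof -
  have "g *v v = v \<longleftrightarrow> matrix_inv g *v v = v" for v
  proof
    assume "g *v v = v"
    hence "matrix_inv g *v v = matrix_inv g *v (g *v v)" by simp
    also have "\<dots> = v" by (simp add: matrix_vector_mul_assoc matrix_inv_mul[OF assms])
    finally show "matrix_inv g *v v = v" .
  next
    assume "matrix_inv g *v v = v"
    hence "g *v v = g *v (matrix_inv g *v v)" by simp
    also have "\<dots> = v" by (simp add: matrix_vector_mul_assoc matrix_mul_matrix_inv[OF assms])
    finally show "g *v v = v" .
  qed
  thus ?thesis by (auto simp: fixspace_def)
qed

lemma codim_matrix_inv:
  fixes g :: "'k::field^'n^'n"
  assumes "invertible g" shows "codim (matrix_inv g) = codim g"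
  by (simp add: codim_def fixspace_matrix_inv[OF assms])

lemma codim_reflection:
  fixes s :: "'k::field^'n^'n"
  assumes "is_reflection s" shows "codim s = 1"
proof -
  obtain H where H: "vec.dim H = CARD('n) - 1" "\<forall>v\<in>H. s *v v = v"
    using assms unfolding is_reflection_def by blast
  have "H \<subseteq> fixspace s" using H(2) by (auto simp: fixspace_def)
  hence "vec.dim H \<le> vec.dim (fixspace s)" by (rule vec.dim_subset)
  hence "codim s \<le> 1" using H(1) by (simp add: codim_def)
  moreover have "codim s \<noteq> 0" using assms by (simp add: codim_eq_0_iff is_reflection_def)
  ultimately show ?thesis by simp
qed

lemma mpow_Suc: "mpow g (Suc k) = g ** mpow g k"
  by (simp add: mpow_def)

lemma mpow_Suc_right: "mpow (g::'k::field^'n^'n) (Suc k) = mpow g k ** g"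
proof (induction k)
  case 0 thus ?case by (simp add: mpow_def)
next
  case (Suc k)
  thus ?case by (simp add: mpow_Suc matrix_mul_assoc)
qed

lemma mpow_matrix_inv_mul_mpow:
  fixes s :: "'k::field^'n^'n"
  assumes "invertible s" shows "mpow (matrix_inv s) k ** mpow s k = mat 1"
proof (induction k)
  case 0 thus ?case by (simp add: mpow_def)
next
  case (Suc k)
  have "mpow (matrix_inv s) (Suc k) ** mpow s (Suc k)
      = matrix_inv s ** (mpow (matrix_inv s) k ** mpow s k) ** s"
    by (simp only: mpow_Suc[of "matrix_inv s"] mpow_Suc_right[of s] matrix_mul_assoc)
  also have "\<dots> = mat 1" using Suc by (simp add: matrix_inv_mul[OF assms])
  finally show ?case .
qed

lemma is_reflection_matrix_inv:
  fixes s :: "'k::field^'n^'n"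
  assumes "is_reflection s" shows "is_reflection (matrix_inv s)"
proof -
  have inv: "invertible s" using assms by (simp add: is_reflection_def)
  obtain k where k: "k > 0" "mpow s k = mat 1"
    using assms by (auto simp: is_reflection_def has_finite_order_def)
  have "mpow (matrix_inv s) k = mat 1"
    using mpow_matrix_inv_mul_mpow[OF inv, of k] k(2) by simp
  hence "has_finite_order (matrix_inv s)" using k(1) by (auto simp: has_finite_order_def)
  moreover have "matrix_inv s \<noteq> mat 1"
    using assms by (simp add: matrix_inv_eq_mat1_iff[OF inv] is_reflection_def)
  moreover obtain H where H: "vec.subspace H" "vec.dim H = CARD('n) - 1" "\<forall>v\<in>H. s *v v = v"
    using assms unfolding is_reflection_def by blast
  moreover have "\<forall>v\<in>H. matrix_inv s *v v = v"
    using H(3) fixspace_matrix_inv[OF inv] by (auto simp: fixspace_def)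
  ultimately show ?thesis using invertible_matrix_inv[OF inv] unfolding is_reflection_def by blast
qed

abbreviation mprod :: "('k::field^'n^'n) list \<Rightarrow> 'k^'n^'n" where
  "mprod l \<equiv> foldr (**) l (mat 1)"

lemma foldr_matrix_mul: "foldr (**) xs (B::'k::field^'n^'n) = mprod xs ** B"
  by (induction xs) (simp_all add: matrix_mul_assoc)

lemma mprod_append: "mprod (xs @ ys) = mprod xs ** mprod (ys::('k::field^'n^'n) list)"
  using foldr_matrix_mul[of xs "mprod ys"] by simp

lemma mprod_snoc: "mprod (xs @ [y]) = mprod xs ** (y::'k::field^'n^'n)"
  using mprod_append[of xs "[y]"] by simp

lemma invertible_mprod: "\<forall>s\<in>set l. invertible s \<Longrightarrow> invertible (mprod (l::('k::field^'n^'n) list))"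
  by (induction l) (auto simp: invertible_mat1 invertible_mult)

lemma matrix_inv_mprod: "\<forall>s\<in>set l. invertible s \<Longrightarrow>
   matrix_inv (mprod (l::('k::field^'n^'n) list)) = mprod (rev (map matrix_inv l))"
proof (induction l)
  case Nil thus ?case by (simp add: matrix_inv_mat1)
next
  case (Cons s l)
  thus ?case by (simp add: matrix_inv_mult invertible_mprod mprod_snoc del: foldr_append)
qed

lemma codim_mprod_le:
  assumes "\<forall>s\<in>set l. is_reflection s"
  shows "codim (mprod (l::('k::field^'n^'n) list)) \<le> length l"
  using assms
proof (induction l)
  case Nil thus ?case by (simp add: codim_mat1)
next
  case (Cons s l)
  thus ?case using codim_mult_le[of s "mprod l"] codim_reflection[of s] by simp
qed

lemma codim_le_mat1: "codim_le (mat 1) (h::'k::field^'n^'n)"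
  by (simp add: codim_le_def matrix_inv_mat1 codim_mat1)

lemma codim_le_trans:
  fixes a b c :: "'k::field^'n^'n"
  assumes "invertible a" "invertible b" "codim_le a b" "codim_le b c"
  shows "codim_le a c"
proof -
  have "(matrix_inv a ** b) ** (matrix_inv b ** c) = matrix_inv a ** (b ** (matrix_inv b ** c))"
    by (simp add: matrix_mul_assoc)
  hence "matrix_inv a ** c = (matrix_inv a ** b) ** (matrix_inv b ** c)"
    by (simp add: matrix_mul_cancel_left[OF assms(2)])
  hence "codim (matrix_inv a ** c) \<le> codim (matrix_inv a ** b) + codim (matrix_inv b ** c)"
    by (simp add: codim_mult_le)
  moreover have "codim c \<le> codim a + codim (matrix_inv a ** c)"
    using codim_mult_le[of a "matrix_inv a ** c"] by (simp add: matrix_mul_cancel_left[OF assms(1)])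
  ultimately show ?thesis using assms(3,4) unfolding codim_le_def by linarith
qed

lemma codim_le_antisym:
  fixes a b :: "'k::field^'n^'n"
  assumes "invertible a" "codim_le a b" "codim b \<le> codim a"
  shows "a = b"
proof -
  have "matrix_inv a ** b = mat 1" using assms(2,3) by (simp add: codim_le_def codim_eq_0_iff[symmetric])
  thus ?thesis using matrix_mul_cancel_left[OF assms(1), of b] by simp
qed

context
  fixes G :: "('k::field^'n^'n) set"
  assumes G: "reflection_group G"
begin

lemma group_invertible: "g \<in> G \<Longrightarrow> invertible g"
  and group_mult: "a \<in> G \<Longrightarrow> b \<in> G \<Longrightarrow> a ** b \<in> G"
  and group_matrix_inv: "a \<in> G \<Longrightarrow> matrix_inv a \<in> G"
  using G by (auto simp: reflection_group_def is_matrix_group_def)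

lemma reflections_matrix_inv: "s \<in> reflections G \<Longrightarrow> matrix_inv s \<in> reflections G"
  by (auto simp: reflections_def group_matrix_inv is_reflection_matrix_inv)

lemma reflection_factorisation: "g \<in> G \<Longrightarrow> \<exists>l. set l \<subseteq> reflections G \<and> mprod l = g"
proof -
  assume "g \<in> G"
  hence "g \<in> gen_group (reflections G)" using G by (simp add: reflection_group_def reflections_def)
  thus ?thesis
  proof (induction rule: gen_group.induct)
    case gen_one
    show ?case by (rule exI[of _ "[]"]) simp
  next
    case (gen_base r)
    show ?case by (rule exI[of _ "[r]"]) (simp add: gen_base)
  next
    case (gen_mult a b)
    then obtain la lb where "set la \<subseteq> reflections G" "mprod la = a"
        "set lb \<subseteq> reflections G" "mprod lb = b"
      by blast
    thus ?case by (intro exI[of _ "la @ lb"]) (simp add: mprod_append del: foldr_append)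
  next
    case (gen_inv a)
    then obtain la where la: "set la \<subseteq> reflections G" "mprod la = a" by blast
    have "\<forall>s\<in>set la. invertible s" using la(1) by (auto simp: reflections_def group_invertible)
    hence "matrix_inv a = mprod (rev (map matrix_inv la))" by (simp add: la(2)[symmetric] matrix_inv_mprod)
    moreover have "set (rev (map matrix_inv la)) \<subseteq> reflections G"
      using la(1) reflections_matrix_inv by auto
    ultimately show ?case by (intro exI[of _ "rev (map matrix_inv la)"]) simp
  qed
qed

lemma refl_length_factorisation:
  assumes "g \<in> G"
  obtains l where "length l = refl_length G g" "set l \<subseteq> reflections G" "mprod l = g"
proof -
  have "\<exists>k l. length l = k \<and> set l \<subseteq> reflections G \<and> mprod l = g"
    using reflection_factorisation[OF assms] by blast
  hence "\<exists>l. length l = refl_length G g \<and> set l \<subseteq> reflections G \<and> mprod l = g"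
    unfolding refl_length_def by (rule LeastI_ex)
  thus ?thesis using that by blast
qed

lemma refl_length_le: "set l \<subseteq> reflections G \<Longrightarrow> mprod l = g \<Longrightarrow> refl_length G g \<le> length l"
  unfolding refl_length_def by (rule Least_le) blast

lemma codim_le_refl_length:
  assumes "g \<in> G" shows "codim g \<le> refl_length G g"
proof -
  obtain l where "length l = refl_length G g" "set l \<subseteq> reflections G" "mprod l = g"
    using refl_length_factorisation[OF assms] .
  thus ?thesis using codim_mprod_le[of l] by (auto simp: reflections_def)
qed

text \<open>An element of minimal \<open>codim\<close> among the non-identity elements below \<open>x\<close> is an atom,
  by transitivity and antisymmetry of the codimension order.\<close>
lemma codim_atom_below:
  assumes "x \<in> G" "x \<noteq> mat 1"
  obtains h where "codim_atom G h" "codim_le h x"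
proof -
  define S where "S = {h\<in>G. h \<noteq> mat 1 \<and> codim_le h x}"
  have "x \<in> S"
    using assms by (simp add: S_def codim_le_def codim_mat1 matrix_inv_mul group_invertible)
  then obtain h where h: "h \<in> S" and h_min: "\<And>h'. h' \<in> S \<Longrightarrow> codim h \<le> codim h'"
    using ex_has_least_nat[of "\<lambda>h. h \<in> S" x codim] by blast
  have "codim_atom G h"
    unfolding codim_atom_def
  proof (intro conjI notI)
    show "h \<in> G" "codim_le (mat 1) h" using h codim_le_mat1 by (auto simp: S_def)
    show "h = mat 1 \<Longrightarrow> False" using h by (simp add: S_def)
  next
    assume "\<exists>h'\<in>G. h' \<noteq> mat 1 \<and> h' \<noteq> h \<and> codim_le (mat 1) h' \<and> codim_le h' h"
    then obtain h' where h': "h' \<in> G" "h' \<noteq> mat 1" "h' \<noteq> h" "codim_le h' h" by blast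
    have "codim_le h' x"
      using codim_le_trans[OF group_invertible[OF h'(1)] group_invertible h'(4)] h by (simp add: S_def)
    hence "codim h \<le> codim h'" using h' h_min by (simp add: S_def)
    thus False using codim_le_antisym[OF group_invertible[OF h'(1)] h'(4)] h'(3) by simp
  qed
  thus ?thesis using that h by (simp add: S_def)
qed

lemma atom_is_reflection_if_refl_length_eq_codim:
  assumes "g \<in> G" "codim_atom G g" "refl_length G g = codim g"
  shows "is_reflection g"
proof -
  obtain l where l: "length l = codim g" "set l \<subseteq> reflections G" "mprod l = g"
    using refl_length_factorisation[OF assms(1)] assms(3) by metis
  have "l \<noteq> []" using l(3) assms(2) by (auto simp: codim_atom_def)
  then obtain s t where st: "l = s # t" by (cases l) auto
  have s: "s \<in> G" "is_reflection s" using l(2) st by (auto simp: reflections_def)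
  show ?thesis
  proof (cases "t = []")
    case True thus ?thesis using st l(3) s by simp
  next
    case False
    have inv_s: "invertible s" using s by (simp add: is_reflection_def)
    have "g = s ** mprod t" using l(3) st by simp
    hence "matrix_inv s ** g = mprod t"
      by (simp add: matrix_mul_assoc matrix_inv_mul[OF inv_s])
    moreover have "codim g \<le> 1 + codim (mprod t)"
      using codim_mult_le[of s "mprod t"] l(3) st codim_reflection[OF s(2)] by simp
    moreover have "codim (mprod t) \<le> length t"
      using l(2) st by (intro codim_mprod_le) (auto simp: reflections_def)
    ultimately have "codim_le s g"
      unfolding codim_le_def using l(1) st codim_reflection[OF s(2)] by simp
    moreover have "s \<noteq> g" using codim_reflection[OF s(2)] l(1) st False by auto
    moreover have "s \<noteq> mat 1" using s by (simp add: is_reflection_def)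
    ultimately show ?thesis
      using assms(2) s(1) codim_le_mat1[of s] unfolding codim_atom_def by blast
  qed
qed

lemma reflection_decreasing_codim_if_atoms_are_reflections:
  assumes atoms: "\<forall>h\<in>G. codim_atom G h \<longrightarrow> is_reflection h"
    and g: "g \<in> G" "g \<noteq> mat 1"
  shows "\<exists>s\<in>reflections G. codim (g ** s) < codim g"
proof -
  have ig: "invertible g" using group_invertible[OF g(1)] .
  obtain s where s: "codim_atom G s" "codim_le s (matrix_inv g)"
  proof (rule codim_atom_below)
    show "matrix_inv g \<in> G" using group_matrix_inv[OF g(1)] .
    show "matrix_inv g \<noteq> mat 1" using g(2) matrix_inv_eq_mat1_iff[OF ig] by simp
  qed
  have sG: "s \<in> G" "is_reflection s" using s(1) atoms by (auto simp: codim_atom_def)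
  have inv_s: "invertible s" using group_invertible[OF sG(1)] .
  have "codim (g ** s) = codim (matrix_inv s ** matrix_inv g)"
    by (simp add: matrix_inv_mult[OF ig inv_s, symmetric] codim_matrix_inv invertible_mult[OF ig inv_s])
  hence "codim (g ** s) + 1 = codim g"
    using s(2) codim_reflection[OF sG(2)] by (simp add: codim_le_def codim_matrix_inv[OF ig])
  thus ?thesis using sG by (auto simp: reflections_def)
qed

text \<open>Strong induction on the codimension: \<open>g = (g s) s\<^sup>-\<^sup>1\<close> with \<open>codim (g s) < codim g\<close>.\<close>
lemma refl_length_eq_codim_if_reflection_decreases_codim:
  assumes dec: "\<forall>g\<in>G. g \<noteq> mat 1 \<longrightarrow> (\<exists>s\<in>reflections G. codim (g ** s) < codim g)"
    and "g \<in> G"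
  shows "refl_length G g = codim g"
  using assms(2)
proof (induction "codim g" arbitrary: g rule: less_induct)
  case (less g)
  show ?case
  proof (cases "g = mat 1")
    case True
    thus ?thesis using refl_length_le[of "[]" g] by (simp add: codim_mat1)
  next
    case False
    then obtain s where s: "s \<in> reflections G" "codim (g ** s) < codim g" using dec less.prems by blast
    have sG: "s \<in> G" using s(1) by (simp add: reflections_def)
    have "g ** s \<in> G" using group_mult[OF less.prems sG] .
    moreover have "refl_length G (g ** s) = codim (g ** s)" using less.hyps s(2) \<open>g ** s \<in> G\<close> by blast
    ultimately obtain l where l: "length l = codim (g ** s)" "set l \<subseteq> reflections G" "mprod l = g ** s"
      using refl_length_factorisation by metis
    have "mprod (l @ [matrix_inv s]) = g ** s ** matrix_inv s"
      using l(3) by (simp only: mprod_snoc)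
    also have "\<dots> = g"
      by (simp add: matrix_mul_assoc[symmetric] matrix_mul_matrix_inv[OF group_invertible[OF sG]])
    finally have "mprod (l @ [matrix_inv s]) = g" .
    hence "refl_length G g \<le> codim (g ** s) + 1"
      using refl_length_le[of "l @ [matrix_inv s]"] l reflections_matrix_inv[OF s(1)] by simp
    thus ?thesis using codim_le_refl_length[OF less.prems] s(2) by linarith
  qed
qed

end

theorem mainTheorem4:
  fixes G :: "('k::real_normed_field^'n^'n) set"
  assumes "reflection_group G"
  shows "((\<forall>g\<in>G. refl_length G g = codim g)
            \<longleftrightarrow> (\<forall>g\<in>G. codim_atom G g \<longrightarrow> refl_length G g = codim g))
       \<and> ((\<forall>g\<in>G. codim_atom G g \<longrightarrow> refl_length G g = codim g)
            \<longleftrightarrow> (\<forall>g\<in>G. codim_atom G g \<longrightarrow> is_reflection g))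
       \<and> ((\<forall>g\<in>G. codim_atom G g \<longrightarrow> is_reflection g)
            \<longleftrightarrow> (\<forall>g\<in>G. g \<noteq> mat 1 \<longrightarrow> (\<exists>s\<in>reflections G. codim (g ** s) < codim g)))"
proof -
  let ?P1 = "\<forall>g\<in>G. refl_length G g = codim g"
  let ?P2 = "\<forall>g\<in>G. codim_atom G g \<longrightarrow> refl_length G g = codim g"
  let ?P3 = "\<forall>g\<in>G. codim_atom G g \<longrightarrow> is_reflection g"
  let ?P4 = "\<forall>g\<in>G. g \<noteq> mat 1 \<longrightarrow> (\<exists>s\<in>reflections G. codim (g ** s) < codim g)"
  have "?P1 \<Longrightarrow> ?P2" by blast
  moreover have "?P2 \<Longrightarrow> ?P3"
    using atom_is_reflection_if_refl_length_eq_codim[OF assms] by blast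
  moreover have "?P3 \<Longrightarrow> ?P4"
    using reflection_decreasing_codim_if_atoms_are_reflections[OF assms] by blast
  moreover have "?P4 \<Longrightarrow> ?P1"
    using refl_length_eq_codim_if_reflection_decreases_codim[OF assms] by blast
  ultimately show ?thesis by blast
qed

end
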